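(* Let $\alpha>0$ be fixed, and for each integer $t\ge 1$ let $\mathbf{h}=[h_1\cdots h_t]^T\sim\mathrm{CN}(\mathbf{I}_t)$ and $\mathbf{h}_k=[h_1\cdots h_k]^T$. Define the full-CSI outage probability $\mathtt{out}(\mathtt{F})=\mathrm{P}(\|\mathbf{h}\|^2\le\alpha)$ and the open-loop outage probability $\mathtt{out}(\mathtt{G})=\mathrm{P}(\|\mathbf{h}_{\kappa}\|^2<\kappa\alpha)$, where $\kappa=\arg\min_{k\in\{1,\ldots,t\}}\mathrm{P}(\|\mathbf{h}_k\|^2<k\alpha)$ (ties broken in favor of the smallest $k$). Then, as $t\to\infty$: $\mathtt{out}(\mathtt{F})\in\Theta\!\left(\frac{\alpha^t}{t!}\right)$ for every $\alpha>0$; $\mathtt{out}(\mathtt{G})\in\Theta\!\left(\frac{(t\alpha)^t e^{-\alpha t}}{t!}\right)$ if $0<\alpha<1$; and $\mathtt{out}(\mathtt{G})\in\Theta(1)$ if $\alpha\ge 1$.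
   Context: $\mathrm{CN}(\mathbf{I}_t)$ denotes the circularly-symmetric complex Gaussian vector with identity covariance, i.e. $h_1,\ldots,h_t$ are i.i.d. standard complex Gaussian. $\mathtt{out}(\mathtt{F})$ is the minimum outage probability of a MISO system with perfect transmitter and receiver channel knowledge (beamforming along $\mathbf{h}/\|\mathbf{h}\|$), and $\mathtt{out}(\mathtt{G})$ that of the optimal open-loop scheme (equal-power transmission on the first $\kappa$ antennas). $\Theta$ is the standard Bachmann–Landau symbol with respect to $t\to\infty$, $\alpha$ fixed. *)

theory Defs
  imports "HOL-Probability.Probability" "HOL-Library.Landau_Symbols"
begin

text \<open>Standard circularly-symmetric complex Gaussian CN(0,1): real and imaginary
  parts independent N(0,1/2).\<close>
definition cn_std :: "complex measure" where
  "cn_std = distr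
     (density lborel (normal_density 0 (sqrt (1/2))) \<Otimes>\<^sub>M
      density lborel (normal_density 0 (sqrt (1/2))))
     borel (\<lambda>(x, y). Complex x y)"

text \<open>Law of h = [h_1 ... h_t]^T ~ CN(I_t); coordinates indexed 0..t-1.\<close>
definition h_law :: "nat \<Rightarrow> (nat \<Rightarrow> complex) measure" where
  "h_law t = (\<Pi>\<^sub>M i\<in>{0..<t}. cn_std)"

definition sqnorm_k :: "nat \<Rightarrow> (nat \<Rightarrow> complex) \<Rightarrow> real" where
  "sqnorm_k k h = (\<Sum>i<k. (cmod (h i))\<^sup>2)"

definition out_F :: "real \<Rightarrow> nat \<Rightarrow> real" where
  "out_F \<alpha> t = measure (h_law t) {h \<in> space (h_law t). sqnorm_k t h \<le> \<alpha>}"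

definition p_open :: "real \<Rightarrow> nat \<Rightarrow> nat \<Rightarrow> real" where
  "p_open \<alpha> t k = measure (h_law t) {h \<in> space (h_law t). sqnorm_k k h < real k * \<alpha>}"

definition kappa :: "real \<Rightarrow> nat \<Rightarrow> nat" where
  "kappa \<alpha> t = (LEAST k. k \<in> {1..t} \<and> (\<forall>j\<in>{1..t}. p_open \<alpha> t k \<le> p_open \<alpha> t j))"

definition out_G :: "real \<Rightarrow> nat \<Rightarrow> real" where
  "out_G \<alpha> t = p_open \<alpha> t (kappa \<alpha> t)"

end

theory Submission
  imports Defs
begin

text \<open>Each \<open>|h\<^sub>i|\<^sup>2\<close> is exponentially distributed with mean 1, so \<open>\<parallel>h\<^sub>k\<parallel>\<^sup>2\<close> is Erlang of
  shape \<open>k\<close> and every outage probability is a Poisson tail,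
  \<open>P(\<parallel>h\<^sub>k\<parallel>\<^sup>2 \<le> x) = e\<^sup>-\<^sup>x \<Sum>\<^bsub>n\<ge>k\<^esub> x\<^sup>n/n!\<close>.
  The tail lies between its first term \<open>x\<^sup>k/k!\<close> and \<open>e\<^sup>x x\<^sup>k/k!\<close>, and for \<open>x = k\<alpha>\<close> with
  \<open>\<alpha> < 1\<close> it is at most \<open>x\<^sup>k/k!/(1 - \<alpha>)\<close> by comparison with a geometric series; this gives
  \<open>out(F)\<close> at once. The first term \<open>(k\<alpha>)\<^sup>k e\<^sup>-\<^sup>k\<^sup>\<alpha>/k!\<close> decreases in \<open>k\<close>, so for \<open>\<alpha> < 1\<close> the
  open-loop minimum over \<open>k \<le> t\<close> is attained at \<open>k = t\<close> up to a constant factor. For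
  \<open>\<alpha> \<ge> 1\<close> each candidate outage is at least the probability that a Poisson variable reaches
  its mean \<open>k\<close>, which is at least \<open>e\<^sup>-\<^sup>2\<close> by a Stirling-type upper bound on \<open>k!\<close>.\<close>

section \<open>The squared modulus of a standard complex Gaussian\<close>

lemma nn_integral_lborel_even:
  fixes f :: "real \<Rightarrow> ennreal"
  assumes [measurable]: "f \<in> borel_measurable borel" and even: "\<And>x. f (-x) = f x"
  shows "(\<integral>\<^sup>+x. f x \<partial>lborel) = 2 * (\<integral>\<^sup>+x. f x * indicator {0<..} x \<partial>lborel)"
proof -
  have "(\<integral>\<^sup>+x. f x \<partial>lborel) = (\<integral>\<^sup>+x. f x * indicator {0<..} x + f x * indicator {..0} x \<partial>lborel)"
    by (intro nn_integral_cong) (auto split: split_indicator)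
  also have "\<dots> = (\<integral>\<^sup>+x. f x * indicator {0<..} x \<partial>lborel) + (\<integral>\<^sup>+x. f x * indicator {..0} x \<partial>lborel)"
    by (intro nn_integral_add) auto
  also have "(\<integral>\<^sup>+x. f x * indicator {..0} x \<partial>lborel) = (\<integral>\<^sup>+x. f (0 + (-1) * x) * indicator {..0} (0 + (-1) * x) \<partial>lborel)"
    using nn_integral_real_affine[of "\<lambda>x. f x * indicator {..0} x" "-1" 0] by simp
  also have "\<dots> = (\<integral>\<^sup>+x. f x * indicator {0..} x \<partial>lborel)"
    by (intro nn_integral_cong) (auto simp: even split: split_indicator)
  also have "\<dots> = (\<integral>\<^sup>+x. f x * indicator {0<..} x \<partial>lborel)"
    by (intro nn_integral_cong_AE AE_I[where N="{0}"]) (auto split: split_indicator)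
  finally show ?thesis by (simp add: mult_2)
qed

lemma nn_integral_x_exp_neg_sq:
  fixes a c :: real
  assumes a: "0 \<le> a" and c: "0 < c"
  shows "(\<integral>\<^sup>+x. ennreal (x * exp (- (x\<^sup>2 * c))) * indicator {..a} (x\<^sup>2 * c) * indicator {0<..} x \<partial>lborel)
     = ennreal ((1 - exp (- a)) / (2 * c))"
proof -
  define b where "b = sqrt (a / c)"
  have b: "0 \<le> b" "b\<^sup>2 * c = a"
    using a c by (auto simp: b_def)
  have sublevel_iff: "x\<^sup>2 * c \<le> a \<longleftrightarrow> x \<le> b" if "0 < x" for x
    using that b c by (metis abs_of_nonneg less_imp_le mult_le_cancel_right_pos power2_le_iff_abs_le)
  have "(\<integral>\<^sup>+x. ennreal (x * exp (- (x\<^sup>2 * c))) * indicator {..a} (x\<^sup>2 * c) * indicator {0<..} x \<partial>lborel)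
      = (\<integral>\<^sup>+x. ennreal (x * exp (- (x\<^sup>2 * c))) * indicator {0..b} x \<partial>lborel)"
    by (intro nn_integral_cong_AE AE_I[where N="{0}"]) (auto simp: sublevel_iff split: split_indicator)
  also have "\<dots> = ennreal ((\<lambda>x. - exp (- (x\<^sup>2 * c)) / (2 * c)) b - (\<lambda>x. - exp (- (x\<^sup>2 * c)) / (2 * c)) 0)"
    using c b by (intro nn_integral_FTC_Icc) (auto intro!: derivative_eq_intros simp: field_simps power2_eq_square)
  also have "\<dots> = ennreal ((1 - exp (- a)) / (2 * c))"
    using c b by (simp add: field_simps)
  finally show ?thesis .
qed

text \<open>Polar coordinates in disguise: substitute \<open>y = x s\<close>, swap the integrals and
  integrate out \<open>x\<close> first, which leaves \<open>\<integral>\<^sub>0\<^sup>\<infinity> ds / (1 + s\<^sup>2) = \<pi>/2\<close>.\<close>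
lemma nn_integral_gaussian_quarter_disc:
  fixes a :: real
  assumes a: "0 \<le> a"
  shows "(\<integral>\<^sup>+x. \<integral>\<^sup>+y. ennreal (exp (- x\<^sup>2) * exp (- y\<^sup>2)) * indicator {..a} (x\<^sup>2 + y\<^sup>2)
            * indicator {0<..} y * indicator {0<..} x \<partial>lborel \<partial>lborel)
       = ennreal (pi / 4 * (1 - exp (- a)))"
proof -
  let ?ff = "\<lambda>x s. ennreal (x * exp (- (x\<^sup>2 * (1 + s\<^sup>2)))) * indicator {..a} (x\<^sup>2 * (1 + s\<^sup>2))
            * indicator {0<..} s * indicator {0<..} x"
  have "(\<integral>\<^sup>+x. \<integral>\<^sup>+y. ennreal (exp (- x\<^sup>2) * exp (- y\<^sup>2)) * indicator {..a} (x\<^sup>2 + y\<^sup>2)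
            * indicator {0<..} y * indicator {0<..} x \<partial>lborel \<partial>lborel)
      = (\<integral>\<^sup>+x. \<integral>\<^sup>+s. ?ff x s \<partial>lborel \<partial>lborel)"
  proof (rule nn_integral_cong)
    fix x :: real
    show "(\<integral>\<^sup>+y. ennreal (exp (- x\<^sup>2) * exp (- y\<^sup>2)) * indicator {..a} (x\<^sup>2 + y\<^sup>2)
            * indicator {0<..} y * indicator {0<..} x \<partial>lborel) = (\<integral>\<^sup>+s. ?ff x s \<partial>lborel)"
    proof (cases "0 < x")
      case True
      then show ?thesis
        by (subst nn_integral_real_affine[where t=0 and c=x])
           (auto simp: nn_integral_cmult[symmetric] ennreal_mult[symmetric] mult_exp_exp field_simps
              zero_less_mult_iff power_mult_distrib intro!: nn_integral_cong split: split_indicator)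
    qed simp
  qed
  also have "\<dots> = (\<integral>\<^sup>+s. \<integral>\<^sup>+x. ?ff x s \<partial>lborel \<partial>lborel)"
    by (rule lborel_pair.Fubini') auto
  also have "\<dots> = (\<integral>\<^sup>+s. ennreal ((1 - exp (- a)) / (2 * (1 + s\<^sup>2))) * indicator {0<..} s \<partial>lborel)"
  proof (rule nn_integral_cong)
    fix s :: real
    show "(\<integral>\<^sup>+x. ?ff x s \<partial>lborel) = ennreal ((1 - exp (- a)) / (2 * (1 + s\<^sup>2))) * indicator {0<..} s"
    proof (cases "0 < s")
      case True
      then have "(\<integral>\<^sup>+x. ?ff x s \<partial>lborel) = (\<integral>\<^sup>+x. ennreal (x * exp (- (x\<^sup>2 * (1 + s\<^sup>2))))
          * indicator {..a} (x\<^sup>2 * (1 + s\<^sup>2)) * indicator {0<..} x \<partial>lborel)"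
        by (intro nn_integral_cong) simp
      also have "\<dots> = ennreal ((1 - exp (- a)) / (2 * (1 + s\<^sup>2)))"
        using a by (intro nn_integral_x_exp_neg_sq) (auto simp: add_pos_nonneg)
      finally show ?thesis
        using True by simp
    qed simp
  qed
  also have "\<dots> = (\<integral>\<^sup>+s. ennreal ((1 - exp (- a)) / (2 * (1 + s\<^sup>2))) * indicator {0..} s \<partial>lborel)"
    by (intro nn_integral_cong_AE AE_I[where N="{0}"]) (auto split: split_indicator)
  also have "\<dots> = ennreal ((1 - exp (- a)) / 2 * (pi / 2) - (\<lambda>s. (1 - exp (- a)) / 2 * arctan s) 0)"
  proof (rule nn_integral_FTC_atLeast)
    show "((\<lambda>s. (1 - exp (- a)) / 2 * arctan s) \<longlongrightarrow> (1 - exp (- a)) / 2 * (pi / 2)) at_top"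
      by (intro tendsto_intros tendsto_arctan_at_top)
    show "0 \<le> (1 - exp (- a)) / (2 * (1 + x\<^sup>2))" for x
      using a by (intro divide_nonneg_pos) (auto simp: add_pos_nonneg)
  qed (auto intro!: derivative_eq_intros simp: add_nonneg_eq_0_iff field_simps power2_eq_square)
  also have "\<dots> = ennreal (pi / 4 * (1 - exp (- a)))"
    by (simp add: algebra_simps)
  finally show ?thesis .
qed

lemma nn_integral_gaussian_disc:
  fixes a :: real
  assumes a: "0 \<le> a"
  shows "(\<integral>\<^sup>+x. \<integral>\<^sup>+y. ennreal (exp (- x\<^sup>2) * exp (- y\<^sup>2)) * indicator {..a} (x\<^sup>2 + y\<^sup>2) \<partial>lborel \<partial>lborel)
       = ennreal (pi * (1 - exp (- a)))"
proof -
  let ?g = "\<lambda>x y. ennreal (exp (- x\<^sup>2) * exp (- y\<^sup>2)) * indicator {..a} (x\<^sup>2 + y\<^sup>2)"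
  have "(\<integral>\<^sup>+x. \<integral>\<^sup>+y. ?g x y \<partial>lborel \<partial>lborel)
      = (\<integral>\<^sup>+x. 2 * (\<integral>\<^sup>+y. ?g x y * indicator {0<..} y \<partial>lborel) \<partial>lborel)"
    by (intro nn_integral_cong nn_integral_lborel_even) auto
  also have "\<dots> = 2 * (\<integral>\<^sup>+x. 2 * (\<integral>\<^sup>+y. ?g x y * indicator {0<..} y \<partial>lborel) * indicator {0<..} x \<partial>lborel)"
    by (intro nn_integral_lborel_even) auto
  also have "\<dots> = 4 * (\<integral>\<^sup>+x. \<integral>\<^sup>+y. ?g x y * indicator {0<..} y * indicator {0<..} x \<partial>lborel \<partial>lborel)"
  proof -
    have "(\<integral>\<^sup>+x. 2 * (\<integral>\<^sup>+y. ?g x y * indicator {0<..} y \<partial>lborel) * indicator {0<..} x \<partial>lborel)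
        = 2 * (\<integral>\<^sup>+x. (\<integral>\<^sup>+y. ?g x y * indicator {0<..} y \<partial>lborel) * indicator {0<..} x \<partial>lborel)"
      by (subst nn_integral_cmult[symmetric]) (auto simp: mult.assoc)
    also have "\<dots> = 2 * (\<integral>\<^sup>+x. \<integral>\<^sup>+y. ?g x y * indicator {0<..} y * indicator {0<..} x \<partial>lborel \<partial>lborel)"
      by (subst nn_integral_multc) auto
    finally show ?thesis
      by (simp add: mult.assoc[symmetric])
  qed
  also have "\<dots> = 4 * ennreal (pi / 4 * (1 - exp (- a)))"
    using nn_integral_gaussian_quarter_disc[OF a] by simp
  also have "\<dots> = ennreal (pi * (1 - exp (- a)))"
    using a by (simp flip: ennreal_numeral ennreal_mult)
  finally show ?thesis .
qed

lemma measurable_Complex_pair: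
  assumes [measurable_cong]: "sets M = sets borel" "sets N = sets borel"
  shows "(\<lambda>(x, y). Complex x y) \<in> borel_measurable (M \<Otimes>\<^sub>M N)"
proof -
  have "(\<lambda>(x, y). Complex x y) = (\<lambda>p. complex_of_real (fst p) + \<i> * complex_of_real (snd p))"
    by (auto simp: Complex_eq)
  then show ?thesis
    by simp
qed

lemma sets_cn_std [measurable_cong, simp]: "sets cn_std = sets borel"
  by (simp add: cn_std_def)

lemma space_cn_std [simp]: "space cn_std = UNIV"
  by (simp add: cn_std_def)

lemma prob_space_cn_std: "prob_space cn_std"
  unfolding cn_std_def
  by (intro prob_space.prob_space_distr prob_space_pair prob_space_normal_density measurable_Complex_pair)
     auto

lemma emeasure_cn_std_cmod_sq_le:
  fixes a :: real
  assumes a: "0 \<le> a"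
  shows "emeasure cn_std {z \<in> space cn_std. (cmod z)\<^sup>2 \<le> a} = ennreal (1 - exp (- a))"
proof -
  let ?N = "density lborel (normal_density 0 (sqrt (1/2)))"
  interpret N: prob_space ?N
    by (rule prob_space_normal_density) simp
  have density: "normal_density 0 (sqrt (1/2)) x = exp (- x\<^sup>2) / sqrt pi" for x
    by (simp add: normal_density_def)
  have disc: "{p \<in> space (?N \<Otimes>\<^sub>M ?N). (fst p)\<^sup>2 + (snd p)\<^sup>2 \<le> a} \<in> sets (?N \<Otimes>\<^sub>M ?N)"
    by measurable
  have "emeasure cn_std {z \<in> space cn_std. (cmod z)\<^sup>2 \<le> a}
      = emeasure (?N \<Otimes>\<^sub>M ?N) {p \<in> space (?N \<Otimes>\<^sub>M ?N). (fst p)\<^sup>2 + (snd p)\<^sup>2 \<le> a}"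
    unfolding cn_std_def
    by (subst emeasure_distr)
       (auto simp: measurable_Complex_pair cmod_def space_pair_measure
          intro!: arg_cong2[where f=emeasure])
  also have "\<dots> = (\<integral>\<^sup>+x. \<integral>\<^sup>+y. indicator {p. (fst p)\<^sup>2 + (snd p)\<^sup>2 \<le> a} (x, y) \<partial>?N \<partial>?N)"
    using N.emeasure_pair_measure[OF disc] by (simp add: space_pair_measure)
  also have "\<dots> = (\<integral>\<^sup>+x. ennreal (1 / pi) * (\<integral>\<^sup>+y. ennreal (exp (- x\<^sup>2) * exp (- y\<^sup>2))
      * indicator {..a} (x\<^sup>2 + y\<^sup>2) \<partial>lborel) \<partial>lborel)"
    by (auto simp: nn_integral_density density nn_integral_cmult[symmetric] ennreal_mult[symmetric]
        intro!: nn_integral_cong split: split_indicator)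
  also have "\<dots> = ennreal (1 / pi) * ennreal (pi * (1 - exp (- a)))"
    by (simp add: nn_integral_cmult nn_integral_gaussian_disc[OF a])
  also have "\<dots> = ennreal (1 - exp (- a))"
    using a by (simp flip: ennreal_mult)
  finally show ?thesis .
qed

lemma distributed_cn_std_cmod_sq:
  "distributed cn_std lborel (\<lambda>z. (cmod z)\<^sup>2) (exponential_density 1)"
  by (rule erlang_distributedI)
     (simp_all add: emeasure_cn_std_cmod_sq_le erlang_CDF_0 del: space_cn_std)

section \<open>Erlang law of the squared norm\<close>

lemma indep_vars_PiM_components:
  assumes M: "\<And>i. i \<in> I \<Longrightarrow> prob_space (M i)" and "I \<noteq> {}"
  shows "prob_space.indep_vars (\<Pi>\<^sub>M i\<in>I. M i) M (\<lambda>i \<omega>. \<omega> i) I"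
proof -
  interpret prob_space "\<Pi>\<^sub>M i\<in>I. M i"
    using M by (rule prob_space_PiM)
  have "distr (\<Pi>\<^sub>M i\<in>I. M i) (\<Pi>\<^sub>M i\<in>I. M i) (\<lambda>\<omega>. \<lambda>i\<in>I. \<omega> i)
      = distr (\<Pi>\<^sub>M i\<in>I. M i) (\<Pi>\<^sub>M i\<in>I. M i) (\<lambda>\<omega>. \<omega>)"
    by (intro distr_cong) (auto simp: space_PiM PiE_def extensional_restrict)
  also have "\<dots> = (\<Pi>\<^sub>M i\<in>I. distr (\<Pi>\<^sub>M i\<in>I. M i) (M i) (\<lambda>\<omega>. \<omega> i))"
    using M by (auto intro!: PiM_cong distr_PiM_component[symmetric])
  finally show ?thesis
    using \<open>I \<noteq> {}\<close> by (subst indep_vars_iff_distr_eq_PiM') auto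
qed

lemma prob_space_h_law: "prob_space (h_law t)"
  unfolding h_law_def by (intro prob_space_PiM prob_space_cn_std)

lemma distributed_h_law_cmod_sq:
  assumes "i < t"
  shows "distributed (h_law t) lborel (\<lambda>h. (cmod (h i))\<^sup>2) (exponential_density 1)"
proof -
  have component: "(\<lambda>h. h i) \<in> measurable (h_law t) cn_std"
    using assms unfolding h_law_def by (intro measurable_component_singleton) auto
  have cmod_sq: "(\<lambda>z. (cmod z)\<^sup>2) \<in> measurable cn_std lborel"
    by simp
  have "distr (h_law t) cn_std (\<lambda>h. h i) = cn_std"
    using assms unfolding h_law_def by (intro distr_PiM_component prob_space_cn_std) auto
  then have "distr (h_law t) lborel (\<lambda>h. (cmod (h i))\<^sup>2) = distr cn_std lborel (\<lambda>z. (cmod z)\<^sup>2)"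
    using distr_distr[OF cmod_sq component] by (simp add: comp_def)
  then show ?thesis
    using distributed_cn_std_cmod_sq measurable_comp[OF component cmod_sq]
    by (simp add: distributed_def comp_def)
qed

lemma distributed_sqnorm_k:
  assumes "0 < k" "k \<le> t"
  shows "distributed (h_law t) lborel (sqnorm_k k) (erlang_density (k - 1) 1)"
proof -
  interpret prob_space "h_law t"
    by (rule prob_space_h_law)
  have "indep_vars (\<lambda>_. cn_std) (\<lambda>i h. h i) {0..<t}"
    using assms unfolding h_law_def by (intro indep_vars_PiM_components prob_space_cn_std) auto
  then have "indep_vars (\<lambda>_. cn_std) (\<lambda>i h. h i) {..<k}"
    by (rule indep_vars_subset) (use assms in auto)
  then have "indep_vars (\<lambda>_. borel) (\<lambda>i h. (cmod (h i))\<^sup>2) {..<k}"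
    by (rule indep_vars_compose2) simp
  then have "distributed (h_law t) lborel (\<lambda>h. \<Sum>i<k. (cmod (h i))\<^sup>2) (erlang_density (card {..<k} - 1) 1)"
    using assms by (intro exponential_distributed_sum distributed_h_law_cmod_sq) auto
  then show ?thesis
    by (simp add: sqnorm_k_def[abs_def])
qed

lemma (in prob_space) distributed_prob_less_eq_prob_le:
  fixes X :: "'a \<Rightarrow> real"
  assumes D: "distributed M lborel X f"
  shows "\<P>(x in M. X x < a) = \<P>(x in M. X x \<le> a)"
proof -
  have [measurable]: "X \<in> borel_measurable M"
    using distributed_measurable[OF D] by simp
  have "emeasure M (X -` {a} \<inter> space M) = (\<integral>\<^sup>+x. f x * indicator {a} x \<partial>lborel)"
    using D by (rule distributed_emeasure) simp
  also have "\<dots> = 0"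
    by (intro nn_integral_zero' AE_I[where N="{a}"]) (auto split: split_indicator)
  finally have "AE x in M. X x \<noteq> a"
    by (intro AE_I[where N="X -` {a} \<inter> space M"]) auto
  with AE_space have "AE x in M. x \<in> {x \<in> space M. X x < a} \<longleftrightarrow> x \<in> {x \<in> space M. X x \<le> a}"
    by eventually_elim auto
  then show ?thesis
    by (rule finite_measure_eq_AE) measurable
qed

lemma out_F_eq_erlang_CDF:
  assumes "0 < \<alpha>" "0 < t"
  shows "out_F \<alpha> t = erlang_CDF (t - 1) 1 \<alpha>"
proof -
  interpret prob_space "h_law t"
    by (rule prob_space_h_law)
  show ?thesis
    unfolding out_F_def using assms by (intro erlang_distributed_le distributed_sqnorm_k) auto
qed

lemma p_open_eq_erlang_CDF:
  assumes "0 \<le> \<alpha>" "0 < k" "k \<le> t"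
  shows "p_open \<alpha> t k = erlang_CDF (k - 1) 1 (real k * \<alpha>)"
proof -
  interpret prob_space "h_law t"
    by (rule prob_space_h_law)
  note D = distributed_sqnorm_k[OF assms(2,3)]
  show ?thesis
    unfolding p_open_def distributed_prob_less_eq_prob_le[OF D]
    using assms by (intro erlang_distributed_le[OF D]) auto
qed

section \<open>Tails of the exponential series\<close>

definition exp_tail :: "real \<Rightarrow> nat \<Rightarrow> real" where
  "exp_tail x k = (\<Sum>m. x ^ (m + k) / fact (m + k))"

lemma sums_exp_real: "(\<lambda>n. x ^ n / fact n) sums exp (x :: real)"
  using exp_converges[of x] by (simp add: divide_inverse mult.commute)

lemma summable_exp_tail: "summable (\<lambda>m. x ^ (m + k) / fact (m + k) :: real)"
  using sums_exp_real[of x] by (subst summable_iff_shift) (rule sums_summable)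

lemma exp_eq_sum_plus_exp_tail: "exp x = (\<Sum>n<k. x ^ n / fact n) + exp_tail x k"
  using suminf_split_initial_segment[OF sums_summable[OF sums_exp_real[of x]], where k=k]
  by (simp add: exp_tail_def sums_unique[OF sums_exp_real] add.commute)

lemma erlang_CDF_eq_exp_tail:
  assumes "0 \<le> x" "0 < k"
  shows "erlang_CDF (k - 1) 1 x = exp (- x) * exp_tail x k"
proof -
  have "{..k - 1} = {..<k}"
    using assms by auto
  then have "erlang_CDF (k - 1) 1 x = 1 - (\<Sum>n<k. x ^ n * exp (- x) / fact n)"
    using assms by (simp add: erlang_CDF_def)
  also have "\<dots> = exp (- x) * (exp x - (\<Sum>n<k. x ^ n / fact n))"
    by (simp add: sum_distrib_left right_diff_distrib exp_minus field_simps)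
  also have "\<dots> = exp (- x) * exp_tail x k"
    using exp_eq_sum_plus_exp_tail[of x k] by simp
  finally show ?thesis .
qed

lemma sum_le_exp_tail:
  assumes "0 \<le> x"
  shows "(\<Sum>m<N. x ^ (m + k) / fact (m + k)) \<le> exp_tail x k"
  unfolding exp_tail_def using assms by (intro sum_le_suminf summable_exp_tail) auto

lemma exp_tail_ge_first_term:
  assumes "0 \<le> x"
  shows "x ^ k / fact k \<le> exp_tail x k"
  using sum_le_exp_tail[OF assms, where N=1 and k=k] by simp

lemma exp_tail_le_first_term_mult:
  assumes "0 \<le> x" "summable c" and ratio: "\<And>m. x ^ m / fact (m + k) \<le> c m / fact k"
  shows "exp_tail x k \<le> x ^ k / fact k * suminf c"
proof -
  have "exp_tail x k \<le> (\<Sum>m. x ^ k / fact k * c m)"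
    unfolding exp_tail_def
  proof (intro suminf_le summable_exp_tail summable_mult allI \<open>summable c\<close>)
    fix m
    have "x ^ (m + k) / fact (m + k) = x ^ k * (x ^ m / fact (m + k))"
      by (simp add: power_add)
    also have "\<dots> \<le> x ^ k * (c m / fact k)"
      using assms by (intro mult_left_mono ratio) auto
    finally show "x ^ (m + k) / fact (m + k) \<le> x ^ k / fact k * c m"
      by simp
  qed
  also have "\<dots> = x ^ k / fact k * suminf c"
    using \<open>summable c\<close> by (rule suminf_mult)
  finally show ?thesis .
qed

lemma fact_mult_fact_le_fact_add: "fact k * fact m \<le> (fact (m + k) :: real)"
proof -
  have "fact k * fact m \<le> (fact (k + m) :: nat)"
    by (intro dvd_imp_le fact_fact_dvd_fact) simp
  then have "real (fact k * fact m) \<le> real (fact (k + m))"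
    by (rule of_nat_mono)
  then show ?thesis
    by (simp add: add.commute)
qed

lemma fact_mult_power_le_fact_add: "fact k * real k ^ m \<le> fact (m + k)"
proof (induction m)
  case (Suc m)
  have "fact k * real k ^ Suc m = real k * (fact k * real k ^ m)"
    by simp
  also have "\<dots> \<le> real (Suc (m + k)) * fact (m + k)"
    using Suc.IH by (intro mult_mono) auto
  finally show ?case
    by simp
qed simp

lemma exp_tail_le_first_term_mult_exp:
  assumes "0 \<le> x"
  shows "exp_tail x k \<le> x ^ k / fact k * exp x"
proof -
  have "x ^ m / fact (m + k) \<le> x ^ m / fact m / fact k" for m
    using assms fact_mult_fact_le_fact_add[of k m]
    by (simp add: divide_simps mult_left_mono mult.commute)
  then show ?thesis
    using exp_tail_le_first_term_mult[OF assms sums_summable[OF sums_exp_real]]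
    by (simp add: sums_unique[OF sums_exp_real])
qed

lemma exp_tail_le_first_term_geometric:
  assumes "0 \<le> \<alpha>" "\<alpha> < 1"
  shows "exp_tail (real k * \<alpha>) k \<le> (real k * \<alpha>) ^ k / fact k / (1 - \<alpha>)"
proof -
  have "(real k * \<alpha>) ^ m / fact (m + k) \<le> \<alpha> ^ m / fact k" for m
  proof -
    have "\<alpha> ^ m * (fact k * real k ^ m) \<le> \<alpha> ^ m * fact (m + k)"
      using assms by (intro mult_left_mono fact_mult_power_le_fact_add) auto
    then show ?thesis
      by (simp add: divide_simps power_mult_distrib mult_ac)
  qed
  then show ?thesis
    using exp_tail_le_first_term_mult[OF _ summable_geometric] assms
    by (simp add: suminf_geometric divide_inverse)
qed

section \<open>The Poisson tail at the mean\<close>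

lemma ln_one_plus_ge:
  fixes x :: real
  assumes "0 \<le> x"
  shows "2 * x / (2 + x) \<le> ln (1 + x)"
proof -
  let ?\<phi> = "\<lambda>y::real. ln (1 + y) - 2 * y / (2 + y)"
  have "?\<phi> 0 \<le> ?\<phi> x"
  proof (rule DERIV_nonneg_imp_nondecreasing[OF assms])
    fix y :: real
    assume "0 \<le> y" "y \<le> x"
    then have "(?\<phi> has_real_derivative (1 / (1 + y) - 4 / (2 + y)\<^sup>2)) (at y)"
      by (auto intro!: derivative_eq_intros simp: field_simps power2_eq_square)
    moreover have "1 / (1 + y) - 4 / (2 + y)\<^sup>2 = y\<^sup>2 / ((1 + y) * (2 + y)\<^sup>2)"
      using \<open>0 \<le> y\<close> by (simp add: divide_simps) (simp add: power2_eq_square algebra_simps)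
    moreover have "0 \<le> y\<^sup>2 / ((1 + y) * (2 + y)\<^sup>2)"
      using \<open>0 \<le> y\<close> by simp
    ultimately show "\<exists>d. (?\<phi> has_real_derivative d) (at y) \<and> 0 \<le> d"
      by metis
  qed
  then show ?thesis
    by simp
qed

lemma exp_two_le_one_plus_inverse_power:
  assumes "0 < n"
  shows "exp 2 \<le> (1 + 1 / real n) ^ (2 * n + 1)"
proof -
  have "2 = real (2 * n + 1) * (2 * (1 / real n) / (2 + 1 / real n))"
    using assms by (simp add: field_simps)
  also have "\<dots> \<le> real (2 * n + 1) * ln (1 + 1 / real n)"
    by (intro mult_left_mono ln_one_plus_ge) auto
  finally have "exp 2 \<le> exp (real (2 * n + 1) * ln (1 + 1 / real n))"
    by simp
  also have "\<dots> = (1 + 1 / real n) ^ (2 * n + 1)"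
    by (subst exp_of_nat_mult) (simp add: add_pos_nonneg)
  finally show ?thesis .
qed

text \<open>The Stirling-type bound \<open>n! \<le> e \<surd>n (n/e)\<^sup>n\<close>, squared.\<close>
lemma fact_square_le:
  assumes "0 < n"
  shows "(fact n)\<^sup>2 * exp (2 * real n) \<le> exp 2 * real n ^ (2 * n + 1)"
  using assms
proof (induction n rule: nat_induct_non_zero)
  case (Suc n)
  let ?a = "real n" and ?b = "real (Suc n)"
  have "exp 2 * ?a ^ (2 * n + 1) \<le> (1 + 1 / ?a) ^ (2 * n + 1) * ?a ^ (2 * n + 1)"
    using exp_two_le_one_plus_inverse_power[OF Suc.hyps] by (intro mult_right_mono) auto
  also have "\<dots> = ?b ^ (2 * n + 1)"
    using Suc.hyps by (simp add: field_simps flip: power_mult_distrib)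
  finally have step: "exp 2 * ?a ^ (2 * n + 1) \<le> ?b ^ (2 * n + 1)" .
  have "exp (2 * ?b) = exp 2 * exp (2 * ?a)"
    by (simp add: distrib_left flip: exp_add)
  then have "(fact (Suc n))\<^sup>2 * exp (2 * ?b) = ?b\<^sup>2 * exp 2 * ((fact n)\<^sup>2 * exp (2 * ?a))"
    by (simp add: power_mult_distrib mult_ac del: of_nat_Suc)
  also have "\<dots> \<le> ?b\<^sup>2 * exp 2 * (exp 2 * ?a ^ (2 * n + 1))"
    using Suc.IH by (intro mult_left_mono) auto
  also have "\<dots> \<le> ?b\<^sup>2 * exp 2 * ?b ^ (2 * n + 1)"
    using step by (intro mult_left_mono) auto
  also have "\<dots> = exp 2 * ?b ^ (2 * Suc n + 1)"
    by (simp add: power2_eq_square mult_ac del: of_nat_Suc)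
  finally show ?case .
qed simp

lemma poisson_mode_ge:
  assumes "0 < k"
  shows "exp (-1) / sqrt (real k) \<le> exp (- real k) * real k ^ k / fact k"
proof (rule power2_le_imp_le)
  have "exp (-1) ^ 2 = exp (-2 :: real)"
    by (simp flip: exp_of_nat_mult)
  then have "(exp (-1) / sqrt (real k))\<^sup>2 = 1 / (exp 2 * real k)"
    using assms by (simp add: power_divide exp_minus field_simps)
  also have "\<dots> \<le> real k ^ (2 * k) / ((fact k)\<^sup>2 * exp (2 * real k))"
    using fact_square_le[OF assms] assms by (simp add: divide_simps mult_ac)
  also have "\<dots> = (real k ^ k / (fact k * exp (real k)))\<^sup>2"
  proof -
    have "exp (real k) ^ 2 = exp (2 * real k)"
      by (simp flip: exp_of_nat_mult)
    then show ?thesis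
      by (simp only: power_divide power_mult_distrib power_even_eq)
  qed
  also have "\<dots> = (exp (- real k) * real k ^ k / fact k)\<^sup>2"
    by (simp add: exp_minus field_simps)
  finally show "(exp (-1) / sqrt (real k))\<^sup>2 \<le> (exp (- real k) * real k ^ k / fact k)\<^sup>2" .
qed simp

lemma power_add_le_exp_mult:
  fixes k c :: real
  assumes "0 < k" "0 \<le> c"
  shows "(k + c) ^ n \<le> exp (c * n / k) * k ^ n"
proof -
  have "(k + c) ^ n = (1 + c / k) ^ n * k ^ n"
    using assms by (simp add: field_simps flip: power_mult_distrib)
  also have "\<dots> \<le> exp (c / k) ^ n * k ^ n"
    using assms by (intro mult_right_mono power_mono exp_ge_add_one_self) auto
  also have "exp (c / k) ^ n = exp (c * n / k)"
    by (subst exp_of_nat_mult[symmetric]) (simp add: mult.commute)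
  finally show ?thesis .
qed

lemma poisson_term_ge_near_mode:
  assumes "0 < k" and near: "real m ^ 2 \<le> real k"
  shows "exp (-1) * (real k ^ k / fact k) \<le> real k ^ (m + k) / fact (m + k)"
proof -
  have "fact (m + k) = fact (m + k) div fact k * (fact k :: nat)"
    by (simp add: fact_dvd)
  also have "\<dots> \<le> (m + k) ^ m * fact k"
    using fact_div_fact_le_pow[of m "m + k"] by (intro mult_right_mono) auto
  finally have "real (fact (m + k)) \<le> real ((m + k) ^ m * fact k)"
    by (rule of_nat_mono)
  then have "(fact (m + k) :: real) \<le> fact k * (real k + real m) ^ m"
    by (simp add: add.commute mult.commute)
  also have "(real k + real m) ^ m \<le> exp (real m * real m / real k) * real k ^ m"
    using assms by (intro power_add_le_exp_mult) auto
  also have "\<dots> \<le> exp 1 * real k ^ m"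
    using assms by (intro mult_right_mono) (auto simp: power2_eq_square)
  finally have "(fact (m + k) :: real) \<le> fact k * (exp 1 * real k ^ m)"
    by (simp add: mult_left_mono)
  then have "real k ^ (m + k) / (fact k * (exp 1 * real k ^ m)) \<le> real k ^ (m + k) / fact (m + k)"
    using assms by (intro divide_left_mono) auto
  then show ?thesis
    using assms by (simp add: exp_minus power_add field_simps)
qed

text \<open>The \<open>\<surd>k\<close> terms \<open>k\<^sup>n/n!\<close> with \<open>k \<le> n < k + \<surd>k\<close> are each at least \<open>k\<^sup>k/(e k!)\<close>,
  while \<open>e\<^sup>-\<^sup>k k\<^sup>k/k! \<ge> 1/(e \<surd>k)\<close>.\<close>
lemma poisson_tail_at_mean_ge:
  assumes "0 < k"
  shows "exp (-2) \<le> exp (- real k) * exp_tail (real k) k"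
proof -
  define N where "N = nat \<lceil>sqrt (real k)\<rceil>"
  have N: "sqrt (real k) \<le> real N"
    unfolding N_def by (rule real_nat_ceiling_ge)
  have near: "real m ^ 2 \<le> real k" if "m < N" for m
  proof -
    have "real m \<le> sqrt (real k)"
      using that unfolding N_def by (simp add: zless_nat_eq_int_zless less_ceiling_iff)
    then have "real m ^ 2 \<le> sqrt (real k) ^ 2"
      by (intro power_mono) auto
    then show ?thesis
      by simp
  qed
  have "real N * (exp (-1) * (real k ^ k / fact k)) = (\<Sum>m<N. exp (-1) * (real k ^ k / fact k))"
    by simp
  also have "\<dots> \<le> (\<Sum>m<N. real k ^ (m + k) / fact (m + k))"
    by (intro sum_mono poisson_term_ge_near_mode assms near) auto
  also have "\<dots> \<le> exp_tail (real k) k"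
    by (rule sum_le_exp_tail) simp
  finally have sum: "real N * (exp (-1) * (real k ^ k / fact k)) \<le> exp_tail (real k) k" .
  have "exp (-2) = sqrt (real k) * exp (-1) * (exp (-1) / sqrt (real k))"
    using assms by (simp flip: exp_add)
  also have "\<dots> \<le> real N * exp (-1) * (exp (- real k) * real k ^ k / fact k)"
    using N poisson_mode_ge[OF assms] by (intro mult_mono) auto
  also have "\<dots> = exp (- real k) * (real N * (exp (-1) * (real k ^ k / fact k)))"
    by simp
  also have "\<dots> \<le> exp (- real k) * exp_tail (real k) k"
    using sum by (intro mult_left_mono) auto
  finally show ?thesis .
qed

section \<open>Asymptotics of the outage probabilities\<close>

lemma out_F_eq_exp_tail:
  assumes "0 < \<alpha>" "0 < t"
  shows "out_F \<alpha> t = exp (- \<alpha>) * exp_tail \<alpha> t"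
  using out_F_eq_erlang_CDF[OF assms] erlang_CDF_eq_exp_tail[of \<alpha> t] assms by simp

lemma p_open_eq_exp_tail:
  assumes "0 \<le> \<alpha>" "0 < k" "k \<le> t"
  shows "p_open \<alpha> t k = exp (- (real k * \<alpha>)) * exp_tail (real k * \<alpha>) k"
  using p_open_eq_erlang_CDF[OF assms] erlang_CDF_eq_exp_tail[of "real k * \<alpha>" k] assms by simp

lemma out_F_bounds:
  assumes "0 < \<alpha>" "0 < t"
  shows "exp (- \<alpha>) * (\<alpha> ^ t / fact t) \<le> out_F \<alpha> t" and "out_F \<alpha> t \<le> \<alpha> ^ t / fact t"
proof -
  show "exp (- \<alpha>) * (\<alpha> ^ t / fact t) \<le> out_F \<alpha> t"
    unfolding out_F_eq_exp_tail[OF assms] using assms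
    by (intro mult_left_mono exp_tail_ge_first_term) auto
  have "out_F \<alpha> t \<le> exp (- \<alpha>) * (\<alpha> ^ t / fact t * exp \<alpha>)"
    unfolding out_F_eq_exp_tail[OF assms] using assms
    by (intro mult_left_mono exp_tail_le_first_term_mult_exp) auto
  then show "out_F \<alpha> t \<le> \<alpha> ^ t / fact t"
    by (simp add: exp_minus field_simps)
qed

text \<open>The first term of the Poisson tail \<open>p_open \<alpha> t k\<close>.\<close>
definition outage_weight :: "real \<Rightarrow> nat \<Rightarrow> real" where
  "outage_weight \<alpha> k = (real k * \<alpha>) ^ k * exp (- \<alpha> * real k) / fact k"

lemma outage_weight_nonneg: "0 \<le> \<alpha> \<Longrightarrow> 0 \<le> outage_weight \<alpha> k"
  by (simp add: outage_weight_def)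

text \<open>The ratio of consecutive weights is \<open>(1 + 1/k)\<^sup>k \<alpha> e\<^sup>-\<^sup>\<alpha> \<le> e \<cdot> e\<^sup>-\<^sup>1\<close>.\<close>
lemma outage_weight_Suc_le:
  assumes "0 < \<alpha>" "0 < k"
  shows "outage_weight \<alpha> (Suc k) \<le> outage_weight \<alpha> k"
proof -
  have "\<alpha> * exp (- \<alpha>) \<le> exp (\<alpha> - 1) * exp (- \<alpha>)"
    using exp_ge_add_one_self[of "\<alpha> - 1"] by (intro mult_right_mono) auto
  then have \<alpha>: "\<alpha> * exp (- \<alpha>) \<le> exp (-1)"
    by (simp flip: exp_add)
  have "(real k + 1) ^ k \<le> real k ^ k * exp 1"
    using power_add_le_exp_mult[of "real k" 1 k] assms by (simp add: mult.commute)
  then have "(real k + 1) ^ k * (\<alpha> * exp (- \<alpha>)) \<le> real k ^ k * exp 1 * exp (-1)"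
    using \<alpha> assms by (intro mult_mono) auto
  then have ratio: "(real k + 1) ^ k * (\<alpha> * exp (- \<alpha>)) \<le> real k ^ k"
    by (simp add: mult.assoc flip: exp_add)
  have "outage_weight \<alpha> (Suc k)
      = (real k + 1) ^ k * (\<alpha> * exp (- \<alpha>)) * (\<alpha> ^ k * exp (- \<alpha> * real k) / fact k)"
  proof -
    have exp: "exp (- \<alpha> * real (Suc k)) = exp (- \<alpha>) * exp (- \<alpha> * real k)"
      by (simp add: algebra_simps flip: exp_add)
    have power: "(real (Suc k) * \<alpha>) ^ Suc k = (real k + 1) * ((real k + 1) ^ k * \<alpha> * \<alpha> ^ k)"
      by (simp only: of_nat_Suc power_mult_distrib power_Suc mult_ac add.commute)
    have fact: "(fact (Suc k) :: real) = (real k + 1) * fact k"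
      by simp
    have "(real k + 1) * fact k \<noteq> (0 :: real)"
      by (simp add: add_pos_nonneg)
    then show ?thesis
      unfolding outage_weight_def exp power fact by (simp only: divide_simps) (simp add: mult_ac)
  qed
  also have "\<dots> \<le> real k ^ k * (\<alpha> ^ k * exp (- \<alpha> * real k) / fact k)"
    using ratio assms by (intro mult_right_mono) auto
  also have "\<dots> = outage_weight \<alpha> k"
    by (simp add: outage_weight_def power_mult_distrib)
  finally show ?thesis .
qed

lemma outage_weight_antimono:
  assumes "0 < \<alpha>" "0 < m" "m \<le> n"
  shows "outage_weight \<alpha> n \<le> outage_weight \<alpha> m"
  using \<open>m \<le> n\<close>
proof (induction n rule: dec_induct)
  case (step n)
  then show ?case
    using outage_weight_Suc_le[OF \<open>0 < \<alpha>\<close>, of n] \<open>0 < m\<close> by linarith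
qed simp

lemma outage_weight_le_p_open:
  assumes "0 < \<alpha>" "0 < k" "k \<le> t"
  shows "outage_weight \<alpha> k \<le> p_open \<alpha> t k"
proof -
  have "outage_weight \<alpha> k = exp (- (real k * \<alpha>)) * ((real k * \<alpha>) ^ k / fact k)"
    by (simp add: outage_weight_def mult_ac)
  also have "\<dots> \<le> p_open \<alpha> t k"
    unfolding p_open_eq_exp_tail[OF less_imp_le[OF assms(1)] assms(2,3)] using assms
    by (intro mult_left_mono exp_tail_ge_first_term) auto
  finally show ?thesis .
qed

lemma p_open_le_outage_weight:
  assumes "0 < \<alpha>" "\<alpha> < 1" "0 < t"
  shows "p_open \<alpha> t t \<le> outage_weight \<alpha> t / (1 - \<alpha>)"
proof -
  have "p_open \<alpha> t t \<le> exp (- (real t * \<alpha>)) * ((real t * \<alpha>) ^ t / fact t / (1 - \<alpha>))"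
    unfolding p_open_eq_exp_tail[OF less_imp_le[OF assms(1)] assms(3) order.refl] using assms
    by (intro mult_left_mono exp_tail_le_first_term_geometric) auto
  then show ?thesis
    by (simp add: outage_weight_def mult_ac)
qed

lemma p_open_le_1: "p_open \<alpha> t k \<le> 1"
  unfolding p_open_def by (rule prob_space.prob_le_1[OF prob_space_h_law])

lemma exp_neg_two_le_p_open:
  assumes "1 \<le> \<alpha>" "0 < k" "k \<le> t"
  shows "exp (-2) \<le> p_open \<alpha> t k"
proof -
  interpret prob_space "h_law t"
    by (rule prob_space_h_law)
  have [measurable]: "sqnorm_k k \<in> borel_measurable (h_law t)"
    using distributed_measurable[OF distributed_sqnorm_k[OF assms(2,3)]] by simp
  have "exp (-2) \<le> p_open 1 t k"
    using poisson_tail_at_mean_ge assms by (simp add: p_open_eq_exp_tail)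
  also have "\<dots> \<le> p_open \<alpha> t k"
  proof -
    have "real k * 1 \<le> real k * \<alpha>"
      using assms by simp
    then show ?thesis
      unfolding p_open_def by (intro finite_measure_mono) auto
  qed
  finally show ?thesis .
qed

lemma kappa_is_argmin:
  assumes "0 < t"
  shows "kappa \<alpha> t \<in> {1..t}" and "\<And>j. j \<in> {1..t} \<Longrightarrow> out_G \<alpha> t \<le> p_open \<alpha> t j"
proof -
  obtain k where "is_arg_min (p_open \<alpha> t) (\<lambda>k. k \<in> {1..t}) k"
    using ex_is_arg_min_if_finite[of "{1..t}" "p_open \<alpha> t"] assms by auto
  then have "\<exists>k. k \<in> {1..t} \<and> (\<forall>j\<in>{1..t}. p_open \<alpha> t k \<le> p_open \<alpha> t j)"
    by (auto simp: is_arg_min_linorder)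
  then have "kappa \<alpha> t \<in> {1..t} \<and> (\<forall>j\<in>{1..t}. p_open \<alpha> t (kappa \<alpha> t) \<le> p_open \<alpha> t j)"
    unfolding kappa_def by (rule LeastI_ex)
  then show "kappa \<alpha> t \<in> {1..t}" and "\<And>j. j \<in> {1..t} \<Longrightarrow> out_G \<alpha> t \<le> p_open \<alpha> t j"
    by (auto simp: out_G_def)
qed

lemma out_G_bounds_less_1:
  assumes "0 < \<alpha>" "\<alpha> < 1" "0 < t"
  shows "outage_weight \<alpha> t \<le> out_G \<alpha> t" and "out_G \<alpha> t \<le> outage_weight \<alpha> t / (1 - \<alpha>)"
proof -
  have \<kappa>: "kappa \<alpha> t \<in> {1..t}"
    using kappa_is_argmin(1)[OF assms(3)] .
  have "outage_weight \<alpha> t \<le> outage_weight \<alpha> (kappa \<alpha> t)"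
    using \<kappa> assms by (intro outage_weight_antimono) auto
  also have "\<dots> \<le> out_G \<alpha> t"
    unfolding out_G_def using \<kappa> assms by (intro outage_weight_le_p_open) auto
  finally show "outage_weight \<alpha> t \<le> out_G \<alpha> t" .
  have "out_G \<alpha> t \<le> p_open \<alpha> t t"
    using assms by (intro kappa_is_argmin(2)) auto
  also have "\<dots> \<le> outage_weight \<alpha> t / (1 - \<alpha>)"
    using assms by (rule p_open_le_outage_weight)
  finally show "out_G \<alpha> t \<le> outage_weight \<alpha> t / (1 - \<alpha>)" .
qed

lemma out_G_bounds_ge_1:
  assumes "1 \<le> \<alpha>" "0 < t"
  shows "exp (-2) \<le> out_G \<alpha> t" and "out_G \<alpha> t \<le> 1"
  using kappa_is_argmin(1)[OF assms(2), where \<alpha>=\<alpha>] assms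
  by (auto simp: out_G_def p_open_le_1 intro!: exp_neg_two_le_p_open)

lemma bigthetaI_bounds:
  fixes f g :: "'a \<Rightarrow> real"
  assumes "0 < c\<^sub>1" "0 < c\<^sub>2"
    and "eventually (\<lambda>x. 0 \<le> g x \<and> c\<^sub>1 * g x \<le> f x \<and> f x \<le> c\<^sub>2 * g x) F"
  shows "f \<in> \<Theta>[F](g)"
proof (rule bigthetaI'[OF assms(1,2)])
  show "eventually (\<lambda>x. c\<^sub>1 * norm (g x) \<le> norm (f x) \<and> norm (f x) \<le> c\<^sub>2 * norm (g x)) F"
    using assms(3)
  proof eventually_elim
    case (elim x)
    moreover have "0 \<le> f x"
      using elim assms(1) by (meson less_imp_le mult_nonneg_nonneg order_trans)
    ultimately show ?case
      by simp
  qed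
qed

theorem proposition1:
  fixes \<alpha> :: real
  assumes "\<alpha> > 0"
  shows "out_F \<alpha> \<in> \<Theta>(\<lambda>t. \<alpha> ^ t / fact t)
     \<and> (\<alpha> < 1 \<longrightarrow> out_G \<alpha> \<in> \<Theta>(\<lambda>t. (real t * \<alpha>) ^ t * exp (- \<alpha> * real t) / fact t))
     \<and> (\<alpha> \<ge> 1 \<longrightarrow> out_G \<alpha> \<in> \<Theta>(\<lambda>t. 1))"
proof (intro conjI impI)
  show "out_F \<alpha> \<in> \<Theta>(\<lambda>t. \<alpha> ^ t / fact t)"
    using assms out_F_bounds
    by (intro bigthetaI_bounds[of "exp (- \<alpha>)" 1] eventually_mono[OF eventually_gt_at_top[of 0]]) auto
  show "out_G \<alpha> \<in> \<Theta>(\<lambda>t. (real t * \<alpha>) ^ t * exp (- \<alpha> * real t) / fact t)" if "\<alpha> < 1"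
  proof -
    have "out_G \<alpha> \<in> \<Theta>(outage_weight \<alpha>)"
      using assms \<open>\<alpha> < 1\<close> out_G_bounds_less_1 outage_weight_nonneg
      by (intro bigthetaI_bounds[of 1 "1 / (1 - \<alpha>)"] eventually_mono[OF eventually_gt_at_top[of 0]]) auto
    then show ?thesis
      by (simp add: outage_weight_def[abs_def])
  qed
  show "out_G \<alpha> \<in> \<Theta>(\<lambda>t. 1)" if "1 \<le> \<alpha>"
    using \<open>1 \<le> \<alpha>\<close> out_G_bounds_ge_1
    by (intro bigthetaI_bounds[of "exp (-2)" 1] eventually_mono[OF eventually_gt_at_top[of 0]]) auto
qed

end
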